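(* Let $f=\frac1n\sum_{i=1}^n f_i$ where each $f_i:\mathbb{R}^d\to\mathbb{R}$ is $L$-smooth, and assume moreover that either each $f_i$ is $\mu$-strongly convex for some $\mu>0$, or $\inf_x f(x)>-\infty$. Let the stepsize satisfy $\gamma\le\frac1{L(n+1)}$. Then the iterates of No Full Grad SARAH (described in the context) satisfy, for every epoch $s$, $$f(x_{s+1}^0)\le f(x_s^0)-\frac{\gamma(n+1)}{2}\|\nabla f(x_s^0)\|^2+\frac{\gamma(n+1)}{2}\Big\|\nabla f(x_s^0)-\frac1{n+1}\sum_{t=0}^{n}v_s^t\Big\|^2.$$
   Context: No Full Grad SARAH: input $x_0^0\in\mathbb{R}^d$, $v_0=0$, stepsize $\gamma>0$. For epochs $s=0,1,\dots$: choose a permutation $\pi_s^1,\dots,\pi_s^n$ of $\{1,\dots,n\}$ (by any shuffling rule); set $\tilde v_s^1=0$, $v_s^0=v_s$, $x_s^1=x_s^0-\gamma v_s^0$; for $t=1,\dots,n$ set $\tilde v_s^{t+1}=\frac{t-1}{t}\tilde v_s^t+\frac1t\nabla f_{\pi_s^t}(x_s^t)$, $v_s^t=\frac1n\big(\nabla f_{\pi_s^t}(x_s^t)-\nabla f_{\pi_s^t}(x_s^{t-1})\big)+v_s^{t-1}$, $x_s^{t+1}=x_s^t-\gamma v_s^t$; then $x_{s+1}^0=x_s^{n+1}$, $v_{s+1}=\tilde v_s^{n+1}$. *)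

theory Defs
  imports "HOL-Analysis.Analysis"
begin

definition L_smooth :: "real \<Rightarrow> ('a::euclidean_space \<Rightarrow> real) \<Rightarrow> ('a \<Rightarrow> 'a) \<Rightarrow> bool" where
  "L_smooth L f g \<longleftrightarrow>
     (\<forall>x. (f has_derivative (\<lambda>h. g x \<bullet> h)) (at x)) \<and>
     (\<forall>x y. norm (g x - g y) \<le> L * norm (x - y))"

definition strongly_convex :: "real \<Rightarrow> ('a::euclidean_space \<Rightarrow> real) \<Rightarrow> bool" where
  "strongly_convex \<mu> f \<longleftrightarrow> convex_on UNIV (\<lambda>x. f x - \<mu> / 2 * (norm x)\<^sup>2)"

end

theory Submission
  imports Defs
begin

text \<open>An epoch moves the iterate from \<open>x\<^sub>s\<^sup>0\<close> to \<open>x\<^sub>s\<^sup>0 - \<gamma>(n+1) w\<close>, where \<open>w\<close> is the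
  average of the directions \<open>v\<^sub>s\<^sup>t\<close>. The average \<open>f\<close> of the \<open>L\<close>-smooth \<open>f\<^sub>i\<close> is \<open>L\<close>-smooth,
  so the descent lemma with step \<open>c = \<gamma>(n+1) \<le> 1/L\<close> gives
  \<open>f(z - c w) \<le> f z - c \<langle>\<nabla>f z, w\<rangle> + c/2 \<parallel>w\<parallel>\<^sup>2\<close>, and polarisation
  \<open>-2\<langle>a, w\<rangle> + \<parallel>w\<parallel>\<^sup>2 = -\<parallel>a\<parallel>\<^sup>2 + \<parallel>a - w\<parallel>\<^sup>2\<close> turns this into the claimed bound.\<close>

lemma L_smooth_descent:
  assumes "L_smooth L f g"
  shows "f y \<le> f x + g x \<bullet> (y - x) + L / 2 * (norm (y - x))\<^sup>2"
proof -
  define d where "d = y - x"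
  have der: "\<And>z. (f has_derivative (\<lambda>h. g z \<bullet> h)) (at z)"
    and lip: "\<And>a b. norm (g a - g b) \<le> L * norm (a - b)"
    using assms unfolding L_smooth_def by auto
  define \<phi> where "\<phi> t = f (x + t *\<^sub>R d) - t * (g x \<bullet> d) - L / 2 * t\<^sup>2 * (norm d)\<^sup>2" for t
  have \<phi>_deriv: "(\<phi> has_real_derivative ((g (x + t *\<^sub>R d) - g x) \<bullet> d - L * t * (norm d)\<^sup>2)) (at t)"
    for t
  proof -
    have line: "((\<lambda>t. x + t *\<^sub>R d) has_derivative (\<lambda>s. s *\<^sub>R d)) (at t)"
      by (auto intro!: derivative_eq_intros)
    have "((\<lambda>t. f (x + t *\<^sub>R d)) has_derivative (\<lambda>s. g (x + t *\<^sub>R d) \<bullet> (s *\<^sub>R d))) (at t)"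
      using diff_chain_at[OF line der[of "x + t *\<^sub>R d"]] by (simp add: o_def)
    then have f_line: "((\<lambda>t. f (x + t *\<^sub>R d)) has_real_derivative (g (x + t *\<^sub>R d) \<bullet> d)) (at t)"
      unfolding has_field_derivative_def by (simp add: mult.commute[of _ "g (x + t *\<^sub>R d) \<bullet> d"])
    show ?thesis unfolding \<phi>_def
      by (rule derivative_eq_intros f_line | simp)+ (simp add: inner_diff_left algebra_simps)
  qed
  have \<phi>_deriv_nonpos: "(g (x + t *\<^sub>R d) - g x) \<bullet> d - L * t * (norm d)\<^sup>2 \<le> 0" if "0 \<le> t" for t
  proof -
    have "(g (x + t *\<^sub>R d) - g x) \<bullet> d \<le> norm (g (x + t *\<^sub>R d) - g x) * norm d"
      by (rule norm_cauchy_schwarz)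
    also have "\<dots> \<le> L * norm (t *\<^sub>R d) * norm d"
      using lip[of "x + t *\<^sub>R d" x] by (simp add: mult_right_mono)
    also have "\<dots> = L * t * (norm d)\<^sup>2"
      using that by (simp add: power2_eq_square)
    finally show ?thesis by simp
  qed
  have "\<phi> 1 \<le> \<phi> 0"
  proof (rule DERIV_nonpos_imp_nonincreasing[of 0 1])
    fix t :: real
    assume "0 \<le> t" "t \<le> 1"
    then show "\<exists>y. DERIV \<phi> t :> y \<and> y \<le> 0"
      using \<phi>_deriv \<phi>_deriv_nonpos by blast
  qed simp
  then show ?thesis unfolding \<phi>_def d_def by simp
qed

lemma L_smooth_average:
  assumes "finite I" "I \<noteq> {}" "\<And>i. i \<in> I \<Longrightarrow> L_smooth L (f i) (g i)"
  shows "L_smooth L (\<lambda>y. (1 / real (card I)) * (\<Sum>i\<in>I. f i y))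
                    (\<lambda>y. (1 / real (card I)) *\<^sub>R (\<Sum>i\<in>I. g i y))"
  unfolding L_smooth_def
proof (intro conjI allI)
  fix x
  have "\<And>i. i \<in> I \<Longrightarrow> (f i has_derivative (\<lambda>h. g i x \<bullet> h)) (at x)"
    using assms(3) unfolding L_smooth_def by blast
  then have "((\<lambda>y. \<Sum>i\<in>I. f i y) has_derivative (\<lambda>h. \<Sum>i\<in>I. g i x \<bullet> h)) (at x)"
    by (rule has_derivative_sum)
  then have "((\<lambda>y. (1 / real (card I)) * (\<Sum>i\<in>I. f i y)) has_derivative
      (\<lambda>h. (1 / real (card I)) * (\<Sum>i\<in>I. g i x \<bullet> h))) (at x)"
    by (rule has_derivative_mult_right)
  moreover have "(\<lambda>h. (1 / real (card I)) * (\<Sum>i\<in>I. g i x \<bullet> h)) =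
      (\<lambda>h. (1 / real (card I)) *\<^sub>R (\<Sum>i\<in>I. g i x) \<bullet> h)"
    by (simp add: inner_sum_left)
  ultimately show "((\<lambda>y. (1 / real (card I)) * (\<Sum>i\<in>I. f i y)) has_derivative
      (\<lambda>h. (1 / real (card I)) *\<^sub>R (\<Sum>i\<in>I. g i x) \<bullet> h)) (at x)"
    by simp
next
  fix x y
  have "card I > 0"
    using assms(1,2) by (simp add: card_gt_0_iff)
  have "norm ((\<Sum>i\<in>I. g i x) - (\<Sum>i\<in>I. g i y)) \<le> (\<Sum>i\<in>I. norm (g i x - g i y))"
    by (metis (no_types) norm_sum sum_subtractf)
  also have "\<dots> \<le> (\<Sum>i\<in>I. L * norm (x - y))"
    using assms(3) unfolding L_smooth_def by (intro sum_mono) blast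
  finally have sum_bound: "norm ((\<Sum>i\<in>I. g i x) - (\<Sum>i\<in>I. g i y)) \<le> real (card I) * (L * norm (x - y))"
    by simp
  have "norm ((1 / real (card I)) *\<^sub>R (\<Sum>i\<in>I. g i x) - (1 / real (card I)) *\<^sub>R (\<Sum>i\<in>I. g i y))
      = (1 / real (card I)) * norm ((\<Sum>i\<in>I. g i x) - (\<Sum>i\<in>I. g i y))"
    by (simp flip: scaleR_diff_right)
  also have "\<dots> \<le> (1 / real (card I)) * (real (card I) * (L * norm (x - y)))"
    using sum_bound by (rule mult_left_mono) simp
  also have "\<dots> = L * norm (x - y)"
    using \<open>card I > 0\<close> by simp
  finally show "norm ((1 / real (card I)) *\<^sub>R (\<Sum>i\<in>I. g i x) - (1 / real (card I)) *\<^sub>R (\<Sum>i\<in>I. g i y))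
      \<le> L * norm (x - y)" .
qed

lemma L_smooth_step_bound:
  assumes "L_smooth L f g" "0 \<le> c" "L * c \<le> 1"
  shows "f (z - c *\<^sub>R w) \<le> f z - c / 2 * (norm (g z))\<^sup>2 + c / 2 * (norm (g z - w))\<^sup>2"
proof -
  have "L * c * c / 2 * (norm w)\<^sup>2 \<le> c / 2 * (norm w)\<^sup>2"
    using mult_right_mono[OF assms(3,2)] by (intro mult_right_mono divide_right_mono) simp_all
  have "f (z - c *\<^sub>R w) \<le> f z + g z \<bullet> (- c *\<^sub>R w) + L / 2 * (c * norm w)\<^sup>2"
    using L_smooth_descent[OF assms(1), of "z - c *\<^sub>R w" z] assms(2) by simp
  also have "\<dots> = f z - c * (g z \<bullet> w) + L * c * c / 2 * (norm w)\<^sup>2"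
    by (simp add: power_mult_distrib power2_eq_square)
  also have "\<dots> \<le> f z - c * (g z \<bullet> w) + c / 2 * (norm w)\<^sup>2"
    using \<open>L * c * c / 2 * (norm w)\<^sup>2 \<le> c / 2 * (norm w)\<^sup>2\<close> by simp
  also have "\<dots> = f z - c / 2 * (norm (g z))\<^sup>2 + c / 2 * (norm (g z - w))\<^sup>2"
    by (simp add: power2_norm_eq_inner inner_diff_left inner_diff_right inner_commute algebra_simps)
  finally show ?thesis .
qed

lemma iterate_sum_directions:
  fixes k :: nat and x v :: "nat \<Rightarrow> 'a::real_vector"
  assumes "\<And>t. t \<le> k \<Longrightarrow> x (t + 1) = x t - \<gamma> *\<^sub>R v t"
  shows "x (k + 1) = x 0 - \<gamma> *\<^sub>R (\<Sum>t=0..k. v t)"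
  using assms
proof (induction k)
  case (Suc k)
  then have "x (Suc k + 1) = x 0 - \<gamma> *\<^sub>R (\<Sum>t=0..k. v t) - \<gamma> *\<^sub>R v (Suc k)"
    by simp
  then show ?case by (simp add: scaleR_right_distrib)
qed simp

theorem lemma8:
  fixes n :: nat and L \<gamma> :: real
    and fs :: "nat \<Rightarrow> 'a::euclidean_space \<Rightarrow> real"
    and g :: "nat \<Rightarrow> 'a \<Rightarrow> 'a"
    and \<pi> :: "nat \<Rightarrow> nat \<Rightarrow> nat"
    and x v vt :: "nat \<Rightarrow> nat \<Rightarrow> 'a"
  defines "F \<equiv> (\<lambda>y. (1 / real n) * (\<Sum>i=1..n. fs i y))"
    and "gradF \<equiv> (\<lambda>y. (1 / real n) *\<^sub>R (\<Sum>i=1..n. g i y))"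
  assumes n_pos: "n \<ge> 1"
    and smooth: "\<And>i. i \<in> {1..n} \<Longrightarrow> L_smooth L (fs i) (g i)"
    and extra: "(\<exists>\<mu>>0. \<forall>i\<in>{1..n}. strongly_convex \<mu> (fs i)) \<or> bdd_below (range F)"
    and gamma_pos: "\<gamma> > 0"
    and gamma_le: "\<gamma> \<le> 1 / (L * real (n + 1))"
    and perm: "\<And>s. bij_betw (\<pi> s) {1..n} {1..n}"
    and v_init: "v 0 0 = 0"
    and vt_1: "\<And>s. vt s 1 = 0"
    and x_1: "\<And>s. x s 1 = x s 0 - \<gamma> *\<^sub>R v s 0"
    and vt_step: "\<And>s t. t \<in> {1..n} \<Longrightarrow>
        vt s (t + 1) = ((real t - 1) / real t) *\<^sub>R vt s t + (1 / real t) *\<^sub>R g (\<pi> s t) (x s t)"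
    and v_step: "\<And>s t. t \<in> {1..n} \<Longrightarrow>
        v s t = (1 / real n) *\<^sub>R (g (\<pi> s t) (x s t) - g (\<pi> s t) (x s (t - 1))) + v s (t - 1)"
    and x_step: "\<And>s t. t \<in> {1..n} \<Longrightarrow> x s (t + 1) = x s t - \<gamma> *\<^sub>R v s t"
    and x_next: "\<And>s. x (s + 1) 0 = x s (n + 1)"
    and v_next: "\<And>s. v (s + 1) 0 = vt s (n + 1)"
  shows "F (x (s + 1) 0) \<le> F (x s 0) - \<gamma> * real (n + 1) / 2 * (norm (gradF (x s 0)))\<^sup>2
           + \<gamma> * real (n + 1) / 2 *
             (norm (gradF (x s 0) - (1 / real (n + 1)) *\<^sub>R (\<Sum>t=0..n. v s t)))\<^sup>2"
proof -
  have "L > 0"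
  proof (rule ccontr)
    assume "\<not> L > 0"
    then have "1 / (L * real (n + 1)) \<le> 0"
      by (simp add: divide_nonpos_nonneg mult_nonpos_nonneg)
    with gamma_pos gamma_le show False by linarith
  qed
  define c where "c = \<gamma> * real (n + 1)"
  define w where "w = (1 / real (n + 1)) *\<^sub>R (\<Sum>t=0..n. v s t)"
  have "L * c \<le> 1"
    using gamma_le \<open>L > 0\<close> by (simp add: c_def pos_le_divide_eq mult_ac)
  have "L_smooth L F gradF"
    using L_smooth_average[of "{1..n}" L fs g] smooth n_pos unfolding F_def gradF_def by simp
  have "x s (t + 1) = x s t - \<gamma> *\<^sub>R v s t" if "t \<le> n" for t
    using that x_1 x_step[of t s] by (cases t) auto
  then have "x (s + 1) 0 = x s 0 - \<gamma> *\<^sub>R (\<Sum>t=0..n. v s t)"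
    using iterate_sum_directions[of n "x s" \<gamma> "v s"] x_next by simp
  also have "\<dots> = x s 0 - c *\<^sub>R w"
    by (simp add: c_def w_def)
  finally show ?thesis
    unfolding c_def[symmetric] w_def[symmetric]
    using L_smooth_step_bound[OF \<open>L_smooth L F gradF\<close>] \<open>L * c \<le> 1\<close> gamma_pos
    by (simp add: c_def)
qed

end
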